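(* Let $P=\{x\in\mathbb{R}^n: Ax\le b,\ 0\le x_i\le u_i \text{ for } i\in I\}$ be a rational polyhedron with $I=\{1,\dots,l\}$ and positive integers $u_i$. If $\mathcal{B}$ and $\mathcal{C}$ are two binarization schemes each defined by unimodular binarization polytopes, then \[\operatorname{proj}_x\big(\mathrm{SC}(P_{\mathcal{B}},I_{\mathcal{B}})\big)=\operatorname{proj}_x\big(\mathrm{SC}(P_{\mathcal{C}},I_{\mathcal{C}})\big).\]
   Context: For positive integers $q,u$, $\Gamma^q_u$ is the set of rational polytopes $B\subseteq\{(x,z)\in\mathbb{R}\times[0,1]^q:0\le x\le u\}$ with $\operatorname{proj}_x(B\cap(\mathbb{R}\times\{0,1\}^q))=\{0,1,\dots,u\}$. $B$ is perfect if for each $x\in\{0,\dots,u\}$ there is a unique $z\in\{0,1\}^q$ with $(x,z)\in B$, and $B=\mathrm{conv}(B\cap(\mathbb{R}\times\{0,1\}^q))$. A perfect $B\in\Gamma^u_u$, $B=\mathrm{conv}\{(j,w^j):j=0,\dots,u\}$ with $w^j\in\{0,1\}^u$, is unimodular if the matrix with columns $w^j-w^0$ ($j=1,\dots,u$) is integral with determinant $\pm1$. A binarization scheme defined by unimodular binarization polytopes is $\mathcal{B}=(B^1,\dots,B^l)$ with each $B^i\in\Gamma^{u_i}_{u_i}$ unimodular; with $q=\sum_iq_i$ ($q_i$ the number of new variables of $B^i$), $P_{\mathcal{B}}=\{(x,z)\in\mathbb{R}^n\times\mathbb{R}^q: x\in P,\ (x_i,z_i)\in B^i\text{ for } i\in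 I\}$, $z=(z_1,\dots,z_l)$, $z_i\in\mathbb{R}^{q_i}$, and $I_{\mathcal{B}}=\{1,\dots,l,n+1,\dots,n+q\}$. Split closure: for $J\subseteq\{1,\dots,N\}$ and $X\subseteq\mathbb{R}^N$, $\mathrm{SC}(X,J)=\bigcap\mathrm{conv}(X\setminus S)$ over all $S=\{y:\pi_0<\pi^Ty<\pi_0+1\}$ with $\pi\in\mathbb{Z}^N$, $\pi_j=0$ for $j\notin J$, $\pi_0\in\mathbb{Z}$. *)

theory Defs
  imports "HOL-Analysis.Analysis" "HOL-Library.Function_Algebras"
begin

(* Finite-dimensional real vectors of varying dimension are modelled as functions
   nat => real; a vector of R^N is a function vanishing outside {0..<N}.
   We make nat => real a real vector space (pointwise) so that the library's
   "convex hull" can be used. *)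

instantiation "fun" :: (type, real_vector) real_vector
begin
definition scaleR_fun :: "real \<Rightarrow> ('a \<Rightarrow> 'b) \<Rightarrow> 'a \<Rightarrow> 'b"
  where "scaleR_fun c f = (\<lambda>x. c *\<^sub>R f x)"
instance
  by standard (auto simp: scaleR_fun_def fun_eq_iff scaleR_add_right scaleR_add_left)
end

definition vecs :: "nat \<Rightarrow> (nat \<Rightarrow> real) set" where
  "vecs N = {y. \<forall>j\<ge>N. y j = 0}"

definition bin :: "nat \<Rightarrow> (nat \<Rightarrow> real) set" where
  "bin q = {z. (\<forall>k<q. z k \<in> {0,1}) \<and> (\<forall>k\<ge>q. z k = 0)}"

definition cube :: "nat \<Rightarrow> (nat \<Rightarrow> real) set" where
  "cube q = {z. (\<forall>k<q. 0 \<le> z k \<and> z k \<le> 1) \<and> (\<forall>k\<ge>q. z k = 0)}"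

definition rational_polytope :: "nat \<Rightarrow> (real \<times> (nat \<Rightarrow> real)) set \<Rightarrow> bool" where
  "rational_polytope q B \<longleftrightarrow>
     (\<exists>V. finite V \<and> V \<subseteq> UNIV \<times> vecs q \<and>
          (\<forall>(x,z)\<in>V. x \<in> \<rat> \<and> (\<forall>k. z k \<in> \<rat>)) \<and> B = convex hull V)"

definition Gamma :: "nat \<Rightarrow> nat \<Rightarrow> (real \<times> (nat \<Rightarrow> real)) set set" where
  "Gamma q u = {B. rational_polytope q B \<and>
      B \<subseteq> {(x,z). z \<in> cube q \<and> 0 \<le> x \<and> x \<le> real u} \<and>
      fst ` (B \<inter> (UNIV \<times> bin q)) = real ` {0..u}}"

definition perfect :: "nat \<Rightarrow> nat \<Rightarrow> (real \<times> (nat \<Rightarrow> real)) set \<Rightarrow> bool" where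
  "perfect q u B \<longleftrightarrow>
     (\<forall>x\<in>{0..u}. \<exists>!z. z \<in> bin q \<and> (real x, z) \<in> B) \<and>
     B = convex hull (B \<inter> (UNIV \<times> bin q))"

definition det_nat :: "nat \<Rightarrow> (nat \<Rightarrow> nat \<Rightarrow> real) \<Rightarrow> real" where
  "det_nat u M = (\<Sum>p | p permutes {0..<u}. of_int (sign p) * (\<Prod>k<u. M k (p k)))"

(* unimodular binarization polytope B in Gamma^u_u:
   B perfect, B = conv{(j,w^j) : j=0..u}, w^j in {0,1}^u, and the matrix with
   columns w^j - w^0 (j=1..u) is integral with determinant +-1.
   Column j-1 (0-based) is w^j - w^0; entry (k, j-1) is w^j_k - w^0_k. *)
definition unimodular_binpoly :: "nat \<Rightarrow> (real \<times> (nat \<Rightarrow> real)) set \<Rightarrow> bool" where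
  "unimodular_binpoly u B \<longleftrightarrow>
     B \<in> Gamma u u \<and> perfect u u B \<and>
     (\<exists>w :: nat \<Rightarrow> nat \<Rightarrow> real.
        (\<forall>j\<le>u. w j \<in> bin u) \<and>
        B = convex hull {(real j, w j) | j. j \<le> u} \<and>
        (\<forall>k<u. \<forall>j<u. w (Suc j) k - w 0 k \<in> \<int>) \<and>
        (det_nat u (\<lambda>k j. w (Suc j) k - w 0 k) = 1 \<or>
         det_nat u (\<lambda>k j. w (Suc j) k - w 0 k) = -1))"

definition polyP :: "nat \<Rightarrow> nat \<Rightarrow> (nat \<Rightarrow> nat \<Rightarrow> real) \<Rightarrow> (nat \<Rightarrow> real)
                     \<Rightarrow> nat \<Rightarrow> (nat \<Rightarrow> nat) \<Rightarrow> (nat \<Rightarrow> real) set" where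
  "polyP n m A b l u = {x \<in> vecs n. (\<forall>r<m. (\<Sum>j<n. A r j * x j) \<le> b r) \<and>
                                    (\<forall>i<l. 0 \<le> x i \<and> x i \<le> real (u i))}"

(* offset of the block z_i inside the new variables: q_i = u_i *)
definition offs :: "(nat \<Rightarrow> nat) \<Rightarrow> nat \<Rightarrow> nat" where
  "offs u i = (\<Sum>k<i. u k)"

(* P_B in R^{n+q}, q = sum_{i<l} u_i; coordinates 0..n-1 are x, coordinate
   n + offs u i + k (k < u_i) is the k-th entry of z_i *)
definition P_scheme :: "nat \<Rightarrow> (nat \<Rightarrow> real) set \<Rightarrow> nat \<Rightarrow> (nat \<Rightarrow> nat)
                        \<Rightarrow> (nat \<Rightarrow> (real \<times> (nat \<Rightarrow> real)) set) \<Rightarrow> (nat \<Rightarrow> real) set" where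
  "P_scheme n P l u B = {y \<in> vecs (n + offs u l).
      (\<lambda>j. if j < n then y j else 0) \<in> P \<and>
      (\<forall>i<l. (y i, (\<lambda>k. if k < u i then y (n + offs u i + k) else 0)) \<in> B i)}"

(* I_B = {1..l} \<union> {n+1..n+q} (here 0-based) *)
definition I_scheme :: "nat \<Rightarrow> nat \<Rightarrow> (nat \<Rightarrow> nat) \<Rightarrow> nat set" where
  "I_scheme n l u = {0..<l} \<union> {n..<n + offs u l}"

definition split_closure :: "nat \<Rightarrow> (nat \<Rightarrow> real) set \<Rightarrow> nat set \<Rightarrow> (nat \<Rightarrow> real) set" where
  "split_closure N X J = \<Inter> {convex hull (X - S) | S.
      \<exists>(\<pi>::nat \<Rightarrow> int) (\<pi>0::int). (\<forall>j. j \<notin> J \<or> N \<le> j \<longrightarrow> \<pi> j = 0) \<and>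
        S = {y. of_int \<pi>0 < (\<Sum>j<N. of_int (\<pi> j) * y j) \<and>
                (\<Sum>j<N. of_int (\<pi> j) * y j) < of_int \<pi>0 + 1}}"

definition proj_x :: "nat \<Rightarrow> (nat \<Rightarrow> real) set \<Rightarrow> (nat \<Rightarrow> real) set" where
  "proj_x n Y = (\<lambda>y j. if j < n then y j else 0) ` Y"

end

(*
  If B and C are unimodular binarization polytopes of the same variable, with vertices (j, w^j) and
  (j, v^j), then the affine map z |-> v^0 + V W^-1 (z - w^0), where W and V have the columns
  w^j - w^0 and v^j - v^0, sends B into C, and it is integral because W is unimodular. Applying such
  maps blockwise to the new variables and fixing x gives an integral affine map F with F(P_B) in P_C
  that preserves x. Its linear part never moves a coordinate outside I_B into one in I_C, so the
  preimage of every split disjunction admissible for (P_C, I_C) is admissible for (P_B, I_B);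
  hence F maps SC(P_B, I_B) into SC(P_C, I_C) and the x-projections are nested. Symmetry gives
  equality.
*)
theory Submission
  imports Defs "Jordan_Normal_Form.Determinant"
begin

definition affine_map ::
  "nat \<Rightarrow> (nat \<Rightarrow> nat \<Rightarrow> real) \<Rightarrow> (nat \<Rightarrow> real) \<Rightarrow> (nat \<Rightarrow> real) \<Rightarrow> nat \<Rightarrow> real"
  where "affine_map N L c y = (\<lambda>j. if j < N then c j + (\<Sum>k<N. L j k * y k) else 0)"

lemma affine_map_cong: "\<forall>k<N. y k = y' k \<Longrightarrow> affine_map N L c y = affine_map N L c y'"
  unfolding affine_map_def by (auto intro!: sum.cong)

lemma affine_map_combination:
  assumes "a + b = 1"
  shows "affine_map N L c (a *\<^sub>R y + b *\<^sub>R y') = a *\<^sub>R affine_map N L c y + b *\<^sub>R affine_map N L c y'"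
proof -
  have "c j = a * c j + b * c j" for j
    using assms by (metis distrib_right mult_1)
  then show ?thesis
    by (auto simp: fun_eq_iff affine_map_def scaleR_fun_def sum_distrib_left sum.distrib[symmetric]
        algebra_simps)
qed

lemma convex_hull_affine_image_subset:
  fixes f :: "'a::real_vector \<Rightarrow> 'b::real_vector"
  assumes "\<And>x y a b. a + b = 1 \<Longrightarrow> f (a *\<^sub>R x + b *\<^sub>R y) = a *\<^sub>R f x + b *\<^sub>R f y"
  shows "f ` (convex hull X) \<subseteq> convex hull (f ` X)"
proof -
  have "convex {x. f x \<in> convex hull (f ` X)}"
    by (rule convexI) (auto simp: assms intro!: convexD[OF convex_convex_hull])
  moreover have "X \<subseteq> {x. f x \<in> convex hull (f ` X)}"
    by (auto intro: hull_inc)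
  ultimately have "convex hull X \<subseteq> {x. f x \<in> convex hull (f ` X)}"
    by (rule hull_minimal[rotated])
  then show ?thesis by auto
qed

lemma sum_mult_affine_map:
  "(\<Sum>j<N. p j * affine_map N L c y j) = (\<Sum>k<N. (\<Sum>j<N. p j * L j k) * y k) + (\<Sum>j<N. p j * c j)"
proof -
  have "(\<Sum>j<N. p j * affine_map N L c y j) = (\<Sum>j<N. \<Sum>k<N. p j * L j k * y k) + (\<Sum>j<N. p j * c j)"
    by (simp add: affine_map_def sum.distrib sum_distrib_left algebra_simps)
  also have "(\<Sum>j<N. \<Sum>k<N. p j * L j k * y k) = (\<Sum>k<N. (\<Sum>j<N. p j * L j k) * y k)"
    by (subst sum.swap) (simp add: sum_distrib_right)
  finally show ?thesis .
qed

definition split_set :: "nat \<Rightarrow> (nat \<Rightarrow> int) \<Rightarrow> int \<Rightarrow> (nat \<Rightarrow> real) set" where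
  "split_set N \<pi> \<pi>0 = {y. of_int \<pi>0 < (\<Sum>j<N. of_int (\<pi> j) * y j) \<and>
                          (\<Sum>j<N. of_int (\<pi> j) * y j) < of_int \<pi>0 + 1}"

lemma mem_split_closure_iff:
  "y \<in> split_closure N X J \<longleftrightarrow>
     (\<forall>\<pi> \<pi>0. (\<forall>j. j \<notin> J \<or> N \<le> j \<longrightarrow> \<pi> j = 0) \<longrightarrow> y \<in> convex hull (X - split_set N \<pi> \<pi>0))"
  unfolding split_closure_def split_set_def by blast

text \<open>Since \<open>L\<close> never maps a coordinate outside \<open>J\<close> into one in \<open>J\<close>, the pulled back
  direction \<open>\<pi>\<^sup>T L\<close> is again an integral direction supported on \<open>J\<close>.\<close>
lemma affine_map_vimage_split_set:
  assumes L: "\<forall>j k. L j k \<in> \<int>" and c: "\<forall>j. c j \<in> \<int>"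
    and L_J: "\<forall>j k. j \<in> J \<longrightarrow> k \<notin> J \<longrightarrow> L j k = 0"
    and \<pi>: "\<forall>j. j \<notin> J \<or> N \<le> j \<longrightarrow> \<pi> j = 0"
  obtains \<pi>' \<pi>0' where "\<forall>j. j \<notin> J \<or> N \<le> j \<longrightarrow> \<pi>' j = 0"
    and "affine_map N L c -` split_set N \<pi> \<pi>0 = split_set N \<pi>' \<pi>0'"
proof -
  define p where "p k = (if k < N then (\<Sum>j<N. of_int (\<pi> j) * L j k) else 0)" for k
  define K where "K = (\<Sum>j<N. of_int (\<pi> j) * c j)"
  have p_Ints: "p k \<in> \<int>" for k
    unfolding p_def using L by (auto intro!: Ints_mult)
  have K_Ints: "K \<in> \<int>"
    unfolding K_def using c by (auto intro!: Ints_mult)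
  have p_zero: "p k = 0" if "k \<notin> J \<or> N \<le> k" for k
    unfolding p_def using that \<pi> L_J by (auto intro!: sum.neutral) blast
  have inner: "(\<Sum>j<N. of_int (\<pi> j) * affine_map N L c y j) = (\<Sum>k<N. p k * y k) + K" for y
    unfolding sum_mult_affine_map p_def K_def by simp
  have p_floor: "of_int \<lfloor>p k\<rfloor> = p k" for k
    using p_Ints by (metis Ints_cases floor_of_int)
  have K_floor: "of_int \<lfloor>K\<rfloor> = K"
    using K_Ints by (metis Ints_cases floor_of_int)
  have "\<forall>j. j \<notin> J \<or> N \<le> j \<longrightarrow> \<lfloor>p j\<rfloor> = 0"
    using p_zero by simp
  moreover have "affine_map N L c -` split_set N \<pi> \<pi>0 = split_set N (\<lambda>k. \<lfloor>p k\<rfloor>) (\<pi>0 - \<lfloor>K\<rfloor>)"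
    by (auto simp: split_set_def inner p_floor K_floor algebra_simps)
  ultimately show thesis
    by (rule that)
qed

lemma affine_map_image_split_closure:
  assumes L: "\<forall>j k. L j k \<in> \<int>" and c: "\<forall>j. c j \<in> \<int>"
    and L_J: "\<forall>j k. j \<in> J \<longrightarrow> k \<notin> J \<longrightarrow> L j k = 0"
    and XY: "affine_map N L c ` X \<subseteq> Y"
  shows "affine_map N L c ` split_closure N X J \<subseteq> split_closure N Y J"
proof clarify
  let ?F = "affine_map N L c"
  fix y assume y: "y \<in> split_closure N X J"
  show "?F y \<in> split_closure N Y J"
    unfolding mem_split_closure_iff
  proof (intro allI impI)
    fix \<pi> :: "nat \<Rightarrow> int" and \<pi>0 :: int
    assume \<pi>: "\<forall>j. j \<notin> J \<or> N \<le> j \<longrightarrow> \<pi> j = 0"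
    obtain \<pi>' \<pi>0' where \<pi>': "\<forall>j. j \<notin> J \<or> N \<le> j \<longrightarrow> \<pi>' j = 0"
      and vimage: "?F -` split_set N \<pi> \<pi>0 = split_set N \<pi>' \<pi>0'"
      using affine_map_vimage_split_set[OF L c L_J \<pi>] .
    have "y \<in> convex hull (X - ?F -` split_set N \<pi> \<pi>0)"
      using y \<pi>' unfolding mem_split_closure_iff vimage by blast
    then have "?F y \<in> convex hull (?F ` (X - ?F -` split_set N \<pi> \<pi>0))"
      using convex_hull_affine_image_subset[of ?F] affine_map_combination by blast
    also have "\<dots> \<subseteq> convex hull (Y - split_set N \<pi> \<pi>0)"
      using XY by (intro hull_mono) auto
    finally show "?F y \<in> convex hull (Y - split_set N \<pi> \<pi>0)" .
  qed
qed

lemma proj_x_image: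
  assumes "\<forall>y j. j < n \<longrightarrow> F y j = y j"
  shows "proj_x n (F ` Y) = proj_x n Y"
proof -
  have "(\<lambda>j. if j < n then F y j else 0) = (\<lambda>j. if j < n then y j else 0)" for y
    using assms by auto
  then show ?thesis unfolding proj_x_def image_image by simp
qed

lemma offs_Suc: "offs u (Suc i) = offs u i + u i"
  unfolding offs_def by simp

lemma offs_mono: "i \<le> i' \<Longrightarrow> offs u i \<le> offs u i'"
  unfolding offs_def by (rule sum_mono2) auto

definition block_coords :: "nat \<Rightarrow> (nat \<Rightarrow> nat) \<Rightarrow> nat \<Rightarrow> nat set" where
  "block_coords n u i = {n + offs u i..<n + offs u i + u i}"

lemma block_coords_subset: "i < l \<Longrightarrow> block_coords n u i \<subseteq> {n..<n + offs u l}"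
  using offs_mono[of "Suc i" l u] unfolding block_coords_def offs_Suc by auto

lemma block_coords_unique:
  assumes "j \<in> block_coords n u i" and "j \<in> block_coords n u i'"
  shows "i = i'"
proof (rule ccontr)
  have separated: "\<not> (j \<in> block_coords n u a \<and> j \<in> block_coords n u b)" if "a < b" for a b
    using offs_mono[of "Suc a" b u] that unfolding block_coords_def offs_Suc by auto
  assume "i \<noteq> i'"
  then show False
    using assms separated[of i i'] separated[of i' i] by (cases "i < i'") auto
qed

lemma sum_block_coords_single:
  assumes "i < l" and "j \<in> block_coords n u i"
  shows "(\<Sum>i'<l. if j \<in> block_coords n u i' then f i' else 0) = f i"
proof -
  have "(\<Sum>i'<l. if j \<in> block_coords n u i' then f i' else 0)
      = (\<Sum>i'<l. if i' = i then f i' else 0)"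
    using assms block_coords_unique by (intro sum.cong) auto
  then show ?thesis using assms by simp
qed

lemma sum_over_block_coords:
  assumes "block_coords n u i \<subseteq> {..<N}"
  shows "(\<Sum>j<N. if j \<in> block_coords n u i then h j else 0) = (\<Sum>k<u i. h (n + offs u i + k))"
proof -
  have "(\<Sum>j<N. if j \<in> block_coords n u i then h j else 0)
      = sum h ({..<N} \<inter> block_coords n u i)"
    by (rule sum.inter_restrict[symmetric]) simp
  also have "\<dots> = sum h (block_coords n u i)"
    by (rule arg_cong[where f = "sum h"]) (use assms in blast)
  also have "\<dots> = (\<Sum>k<u i. h (n + offs u i + k))"
    using sum.atLeastLessThan_shift_bounds[of h 0 "n + offs u i" "u i"]
    by (simp add: block_coords_def atLeast0LessThan add.commute comp_def)
  finally show ?thesis .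
qed

definition block_matrix ::
  "nat \<Rightarrow> nat \<Rightarrow> (nat \<Rightarrow> nat) \<Rightarrow> (nat \<Rightarrow> nat \<Rightarrow> nat \<Rightarrow> real) \<Rightarrow> nat \<Rightarrow> nat \<Rightarrow> real"
  where "block_matrix n l u L j k = (if j < n \<and> k = j then 1 else 0) +
     (\<Sum>i<l. if j \<in> block_coords n u i \<and> k \<in> block_coords n u i
            then L i (j - (n + offs u i)) (k - (n + offs u i)) else 0)"

definition block_vector :: "nat \<Rightarrow> nat \<Rightarrow> (nat \<Rightarrow> nat) \<Rightarrow> (nat \<Rightarrow> nat \<Rightarrow> real) \<Rightarrow> nat \<Rightarrow> real"
  where "block_vector n l u c j =
     (\<Sum>i<l. if j \<in> block_coords n u i then c i (j - (n + offs u i)) else 0)"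

abbreviation block_map ::
  "nat \<Rightarrow> nat \<Rightarrow> (nat \<Rightarrow> nat) \<Rightarrow> (nat \<Rightarrow> nat \<Rightarrow> nat \<Rightarrow> real) \<Rightarrow> (nat \<Rightarrow> nat \<Rightarrow> real)
     \<Rightarrow> (nat \<Rightarrow> real) \<Rightarrow> nat \<Rightarrow> real" where
  "block_map n l u L c \<equiv> affine_map (n + offs u l) (block_matrix n l u L) (block_vector n l u c)"

lemma block_map_x:
  assumes "j < n"
  shows "block_map n l u L c y j = y j"
proof -
  have outside: "j \<notin> block_coords n u i" for i
    using assms unfolding block_coords_def by auto
  have matrix: "block_matrix n l u L j k * y k = (if k = j then y j else 0)" for k
    using assms outside unfolding block_matrix_def by auto
  have vector: "block_vector n l u c j = 0"
    using outside unfolding block_vector_def by auto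
  show ?thesis
    using assms by (simp add: affine_map_def matrix vector)
qed

lemma block_map_block:
  assumes i: "i < l" and k: "k < u i"
  shows "block_map n l u L c y (n + offs u i + k)
    = affine_map (u i) (L i) (c i) (\<lambda>k. y (n + offs u i + k)) k"
proof -
  let ?j = "n + offs u i + k"
  have j: "?j \<in> block_coords n u i"
    using k unfolding block_coords_def by simp
  have "block_matrix n l u L ?j k' = (\<Sum>i'<l. if ?j \<in> block_coords n u i'
      then (if k' \<in> block_coords n u i' then L i' (?j - (n + offs u i')) (k' - (n + offs u i')) else 0)
      else 0)" for k'
    unfolding block_matrix_def by (auto intro!: sum.cong)
  also have "\<dots> k'
      = (if k' \<in> block_coords n u i then L i (?j - (n + offs u i)) (k' - (n + offs u i)) else 0)" for k'
    by (rule sum_block_coords_single[OF i j])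
  finally have matrix: "block_matrix n l u L ?j k'
      = (if k' \<in> block_coords n u i then L i k (k' - (n + offs u i)) else 0)" for k'
    by simp
  have vector: "block_vector n l u c ?j = c i k"
    unfolding block_vector_def
    using sum_block_coords_single[OF i j, of "\<lambda>i'. c i' (?j - (n + offs u i'))"] by simp
  have block: "block_coords n u i \<subseteq> {..<n + offs u l}"
    using block_coords_subset[OF i, of n u] by auto
  have "(\<Sum>k'<n + offs u l. block_matrix n l u L ?j k' * y k')
      = (\<Sum>k'<n + offs u l.
          if k' \<in> block_coords n u i then L i k (k' - (n + offs u i)) * y k' else 0)"
    unfolding matrix by (intro sum.cong) auto
  also have "\<dots> = (\<Sum>k'<u i. L i k k' * y (n + offs u i + k'))"
    using sum_over_block_coords[OF block, of "\<lambda>k'. L i k (k' - (n + offs u i)) * y k'"] by simp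
  finally have row: "(\<Sum>k'<n + offs u l. block_matrix n l u L ?j k' * y k')
      = (\<Sum>k'<u i. L i k k' * y (n + offs u i + k'))" .
  have "?j < n + offs u l"
    using j block by auto
  then show ?thesis
    unfolding affine_map_def using k by (simp only: row vector if_True)
qed

lemma block_matrix_Ints: "\<forall>i<l. \<forall>k k'. L i k k' \<in> \<int> \<Longrightarrow> block_matrix n l u L j k \<in> \<int>"
  unfolding block_matrix_def by (auto intro!: Ints_add)

lemma block_vector_Ints: "\<forall>i<l. \<forall>k. c i k \<in> \<int> \<Longrightarrow> block_vector n l u c j \<in> \<int>"
  unfolding block_vector_def by auto

lemma block_matrix_I_scheme:
  assumes "j \<in> I_scheme n l u" and "k \<notin> I_scheme n l u"
  shows "block_matrix n l u L j k = 0"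
proof -
  have "k \<notin> block_coords n u i" if "i < l" for i
    using assms(2) block_coords_subset[OF that, of n u] unfolding I_scheme_def by auto
  then show ?thesis
    using assms unfolding block_matrix_def by (auto intro!: sum.neutral)
qed

lemma block_map_P_scheme:
  assumes "l \<le> n"
    and LC: "\<forall>i<l. \<forall>x z. (x, z) \<in> B i \<longrightarrow> (x, affine_map (u i) (L i) (c i) z) \<in> C i"
  shows "block_map n l u L c ` P_scheme n P l u B \<subseteq> P_scheme n P l u C"
proof clarify
  let ?F = "block_map n l u L c"
  fix y assume y: "y \<in> P_scheme n P l u B"
  have "(?F y i, \<lambda>k. if k < u i then ?F y (n + offs u i + k) else 0) \<in> C i" if i: "i < l" for i
  proof -
    let ?z = "\<lambda>k. if k < u i then y (n + offs u i + k) else 0"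
    have "(y i, affine_map (u i) (L i) (c i) ?z) \<in> C i"
      using y i LC unfolding P_scheme_def by auto
    moreover have "?F y i = y i"
      using i assms(1) block_map_x by simp
    moreover have "affine_map (u i) (L i) (c i) ?z
        = (\<lambda>k. if k < u i then ?F y (n + offs u i + k) else 0)"
      using block_map_block[OF i] affine_map_cong[of "u i" ?z "\<lambda>k. y (n + offs u i + k)"]
      by (auto simp: fun_eq_iff affine_map_def)
    ultimately show ?thesis by simp
  qed
  moreover have "(\<lambda>j. if j < n then ?F y j else 0) = (\<lambda>j. if j < n then y j else 0)"
    using block_map_x by auto
  moreover have "?F y \<in> vecs (n + offs u l)"
    by (simp add: vecs_def affine_map_def)
  ultimately show "?F y \<in> P_scheme n P l u C"
    using y unfolding P_scheme_def by simp
qed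

lemma proj_x_split_closure_P_scheme_mono:
  assumes "l \<le> n"
    and maps: "\<forall>i<l. \<exists>L c. (\<forall>k k'. L k k' \<in> \<int>) \<and> (\<forall>k. c k \<in> \<int>) \<and>
      (\<forall>x z. (x, z) \<in> B i \<longrightarrow> (x, affine_map (u i) L c z) \<in> C i)"
  shows "proj_x n (split_closure (n + offs u l) (P_scheme n P l u B) (I_scheme n l u))
       \<subseteq> proj_x n (split_closure (n + offs u l) (P_scheme n P l u C) (I_scheme n l u))"
proof -
  obtain L c where L: "\<forall>i<l. \<forall>k k'. L i k k' \<in> \<int>" and c: "\<forall>i<l. \<forall>k. c i k \<in> \<int>"
    and LC: "\<forall>i<l. \<forall>x z. (x, z) \<in> B i \<longrightarrow> (x, affine_map (u i) (L i) (c i) z) \<in> C i"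
    using maps by metis
  let ?F = "block_map n l u L c"
  have "?F ` split_closure (n + offs u l) (P_scheme n P l u B) (I_scheme n l u)
      \<subseteq> split_closure (n + offs u l) (P_scheme n P l u C) (I_scheme n l u)"
  proof (rule affine_map_image_split_closure)
    show "\<forall>j k. block_matrix n l u L j k \<in> \<int>"
      using block_matrix_Ints[OF L] by blast
    show "\<forall>j. block_vector n l u c j \<in> \<int>"
      using block_vector_Ints[OF c] by blast
    show "\<forall>j k. j \<in> I_scheme n l u \<longrightarrow> k \<notin> I_scheme n l u \<longrightarrow> block_matrix n l u L j k = 0"
      using block_matrix_I_scheme by blast
  qed (rule block_map_P_scheme[OF assms(1) LC])
  then have "proj_x n (?F ` split_closure (n + offs u l) (P_scheme n P l u B) (I_scheme n l u))
      \<subseteq> proj_x n (split_closure (n + offs u l) (P_scheme n P l u C) (I_scheme n l u))"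
    unfolding proj_x_def by (rule image_mono)
  then show ?thesis
    using proj_x_image[of n ?F] block_map_x by simp
qed

lemma det_Ints:
  fixes A :: "real mat"
  assumes A: "A \<in> carrier_mat k k" and entries: "\<forall>i<k. \<forall>j<k. A $$ (i,j) \<in> \<int>"
  shows "det A \<in> \<int>"
  unfolding det_def'[OF A]
proof (intro Ints_sum Ints_mult Ints_prod)
  fix p i assume "p \<in> {p. p permutes {0..<k}}" "i \<in> {0..<k}"
  then show "A $$ (i, p i) \<in> \<int>"
    using entries permutes_in_image by fastforce
qed auto

lemma cofactor_Ints:
  fixes A :: "real mat"
  assumes A: "A \<in> carrier_mat k k" and entries: "\<forall>i<k. \<forall>j<k. A $$ (i,j) \<in> \<int>"
    and "i < k" "j < k"
  shows "cofactor A i j \<in> \<int>"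
proof -
  have "det (mat_delete A i j) \<in> \<int>"
    by (rule det_Ints[of _ "k - 1"]) (use A entries in \<open>auto simp: mat_delete_def\<close>)
  then show ?thesis unfolding cofactor_def by (intro Ints_mult) auto
qed

lemma det_nat_eq_det: "det_nat u W = det (mat u u (\<lambda>(k, j). W k j))"
  unfolding det_def'[OF mat_carrier] det_nat_def
proof (rule sum.cong)
  fix p assume "p \<in> {p. p permutes {0..<u}}"
  then have "\<forall>i<u. p i < u" using permutes_in_image by fastforce
  then show "of_int (sign p) * (\<Prod>k<u. W k (p k))
      = of_int (sign p) * (\<Prod>i = 0..<u. mat u u (\<lambda>(k, j). W k j) $$ (i, p i))"
    by (auto simp: atLeast0LessThan intro!: prod.cong)
qed (simp add: atLeast0LessThan)

text \<open>The inverse of an integral matrix with determinant \<open>\<plusminus>1\<close> is \<open>det W \<cdot> adj W\<close>,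
  an integral matrix.\<close>
lemma unimodular_integral_left_inverse:
  fixes W :: "nat \<Rightarrow> nat \<Rightarrow> real"
  assumes entries: "\<forall>k<u. \<forall>j<u. W k j \<in> \<int>"
    and det: "det_nat u W = 1 \<or> det_nat u W = -1"
  obtains W' where "\<forall>k j. W' k j \<in> \<int>"
    and "\<forall>k<u. \<forall>j<u. (\<Sum>t<u. W' k t * W t j) = (if k = j then 1 else 0)"
proof -
  define A :: "real mat" where "A = mat u u (\<lambda>(k, j). W k j)"
  have A: "A \<in> carrier_mat u u" unfolding A_def by auto
  have A_entries: "\<forall>i<u. \<forall>j<u. A $$ (i, j) \<in> \<int>" using entries unfolding A_def by auto
  have det_sq: "det A * det A = 1" using det det_nat_eq_det[of u W] unfolding A_def by auto
  define W' where "W' k j = (if k < u \<and> j < u then det A * adj_mat A $$ (k, j) else 0)" for k j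
  have W'_Ints: "\<forall>k j. W' k j \<in> \<int>"
  proof (intro allI)
    fix k j
    show "W' k j \<in> \<int>"
    proof (cases "k < u \<and> j < u")
      case True
      then have "adj_mat A $$ (k, j) = cofactor A j k" using A by (auto simp: adj_mat_def)
      then show ?thesis
        using True det_Ints[OF A A_entries] cofactor_Ints[OF A A_entries, of j k]
        unfolding W'_def by auto
    qed (auto simp: W'_def)
  qed
  have W'_inverse: "\<forall>k<u. \<forall>j<u. (\<Sum>t<u. W' k t * W t j) = (if k = j then 1 else 0)"
  proof (intro allI impI)
    fix k j assume kj: "k < u" "j < u"
    have "(\<Sum>t<u. adj_mat A $$ (k, t) * W t j) = (adj_mat A * A) $$ (k, j)"
      using kj A adj_mat(1)[OF A]
      by (auto simp: scalar_prod_def A_def atLeast0LessThan intro!: sum.cong)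
    also have "\<dots> = det A * (if k = j then 1 else 0)"
      using adj_mat(3)[OF A] kj by simp
    finally have "det A * (\<Sum>t<u. adj_mat A $$ (k, t) * W t j) = (if k = j then 1 else 0)"
      using det_sq by (simp add: mult.assoc[symmetric])
    then show "(\<Sum>t<u. W' k t * W t j) = (if k = j then 1 else 0)"
      unfolding W'_def using kj by (simp add: sum_distrib_left mult.assoc)
  qed
  show thesis
    using that[OF W'_Ints W'_inverse] .
qed

text \<open>The affine map \<open>z \<mapsto> v\<^sup>0 + V W\<^sup>-\<^sup>1 (z - w\<^sup>0)\<close>, where the columns of \<open>W\<close> and \<open>V\<close> are
  \<open>w\<^sup>j - w\<^sup>0\<close> and \<open>v\<^sup>j - v\<^sup>0\<close>, sends each \<open>w\<^sup>j\<close> to \<open>v\<^sup>j\<close>.\<close>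
lemma affine_map_unimodular_frame:
  fixes w v :: "nat \<Rightarrow> nat \<Rightarrow> real"
  assumes w: "\<forall>j\<le>q. \<forall>k. w j k \<in> \<int>" and v: "\<forall>j\<le>q. \<forall>k. v j k \<in> \<int>"
    and det: "det_nat q (\<lambda>k j. w (Suc j) k - w 0 k) = 1 \<or> det_nat q (\<lambda>k j. w (Suc j) k - w 0 k) = -1"
  obtains L c where "\<forall>k k'. L k k' \<in> \<int>" and "\<forall>k. c k \<in> \<int>"
    and "\<forall>j\<le>q. \<forall>k<q. affine_map q L c (w j) k = v j k"
proof -
  obtain W' where W'_Ints: "\<forall>k j. W' k j \<in> \<int>"
    and W'_inv: "\<forall>k<q. \<forall>j<q. (\<Sum>t<q. W' k t * (w (Suc j) t - w 0 t)) = (if k = j then 1 else 0)"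
    using unimodular_integral_left_inverse[of q "\<lambda>k j. w (Suc j) k - w 0 k"] w det by auto
  define L where "L k k' = (\<Sum>s<q. (v (Suc s) k - v 0 k) * W' s k')" for k k'
  define c where "c k = v 0 k - (\<Sum>k'<q. L k k' * w 0 k')" for k
  have vertex: "affine_map q L c (w j) k = v j k" if j: "j \<le> q" and k: "k < q" for j k
  proof -
    have "affine_map q L c (w j) k = v 0 k + (\<Sum>k'<q. L k k' * (w j k' - w 0 k'))"
      using k by (simp add: affine_map_def c_def right_diff_distrib sum_subtractf)
    also have "(\<Sum>k'<q. L k k' * (w j k' - w 0 k')) = v j k - v 0 k"
    proof (cases j)
      case (Suc t)
      have "(\<Sum>k'<q. L k k' * (w j k' - w 0 k'))
          = (\<Sum>s<q. (v (Suc s) k - v 0 k) * (\<Sum>k'<q. W' s k' * (w (Suc t) k' - w 0 k')))"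
        unfolding L_def Suc sum_distrib_right sum_distrib_left
        by (subst sum.swap) (simp add: algebra_simps)
      also have "\<dots> = (\<Sum>s<q. (v (Suc s) k - v 0 k) * (if s = t then 1 else 0))"
        using W'_inv Suc j by (intro sum.cong) auto
      also have "\<dots> = v j k - v 0 k"
        using Suc j by (simp add: if_distrib cong: if_cong)
      finally show ?thesis .
    qed simp
    finally show ?thesis by simp
  qed
  show thesis
  proof (rule that)
    show "\<forall>k k'. L k k' \<in> \<int>"
      unfolding L_def using v W'_Ints by (auto intro!: Ints_mult Ints_diff)
    then show "\<forall>k. c k \<in> \<int>"
      unfolding c_def using v w by (auto intro!: Ints_mult Ints_diff)
  qed (use vertex in auto)
qed

lemma bin_Ints: "z \<in> bin q \<Longrightarrow> z k \<in> \<int>"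
  unfolding bin_def by (cases "k < q") auto

lemma unimodular_binpoly_affine_map:
  assumes B: "unimodular_binpoly q B" and C: "unimodular_binpoly q C"
  obtains L c where "\<forall>k k'. L k k' \<in> \<int>" and "\<forall>k. c k \<in> \<int>"
    and "\<forall>x z. (x, z) \<in> B \<longrightarrow> (x, affine_map q L c z) \<in> C"
proof -
  obtain w where w: "\<forall>j\<le>q. w j \<in> bin q" and B_hull: "B = convex hull {(real j, w j) | j. j \<le> q}"
    and det: "det_nat q (\<lambda>k j. w (Suc j) k - w 0 k) = 1 \<or> det_nat q (\<lambda>k j. w (Suc j) k - w 0 k) = -1"
    using B unfolding unimodular_binpoly_def by blast
  obtain v where v: "\<forall>j\<le>q. v j \<in> bin q" and C_hull: "C = convex hull {(real j, v j) | j. j \<le> q}"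
    using C unfolding unimodular_binpoly_def by blast
  obtain L c where L: "\<forall>k k'. L k k' \<in> \<int>" and c: "\<forall>k. c k \<in> \<int>"
    and vertex: "\<forall>j\<le>q. \<forall>k<q. affine_map q L c (w j) k = v j k"
    using affine_map_unimodular_frame[of q w v] w v det bin_Ints by blast
  define \<Phi> where "\<Phi> p = (fst p, affine_map q L c (snd p))" for p :: "real \<times> (nat \<Rightarrow> real)"
  have "affine_map q L c (w j) = v j" if "j \<le> q" for j
    using vertex v that by (auto simp: fun_eq_iff affine_map_def bin_def)
  then have "\<Phi> ` {(real j, w j) | j. j \<le> q} = {(real j, v j) | j. j \<le> q}"
    unfolding \<Phi>_def by force
  moreover have "\<Phi> ` B \<subseteq> convex hull (\<Phi> ` {(real j, w j) | j. j \<le> q})"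
    unfolding B_hull
    by (rule convex_hull_affine_image_subset) (auto simp: \<Phi>_def affine_map_combination)
  ultimately have "\<Phi> ` B \<subseteq> C"
    using C_hull by simp
  then show thesis
    using that[OF L c] unfolding \<Phi>_def by force
qed

theorem corollary2:
  fixes n m l :: nat and A :: "nat \<Rightarrow> nat \<Rightarrow> real" and b :: "nat \<Rightarrow> real"
    and u :: "nat \<Rightarrow> nat"
    and B C :: "nat \<Rightarrow> (real \<times> (nat \<Rightarrow> real)) set"
  assumes "l \<le> n"
    and "\<forall>r<m. \<forall>j<n. A r j \<in> \<rat>" and "\<forall>r<m. b r \<in> \<rat>"
    and "\<forall>i<l. 0 < u i"
    and "\<forall>i<l. unimodular_binpoly (u i) (B i)"
    and "\<forall>i<l. unimodular_binpoly (u i) (C i)"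
  shows "proj_x n (split_closure (n + offs u l) (P_scheme n (polyP n m A b l u) l u B)
                     (I_scheme n l u))
       = proj_x n (split_closure (n + offs u l) (P_scheme n (polyP n m A b l u) l u C)
                     (I_scheme n l u))"
proof -
  have maps: "\<forall>i<l. \<exists>L c. (\<forall>k k'. L k k' \<in> \<int>) \<and> (\<forall>k. c k \<in> \<int>) \<and>
      (\<forall>x z. (x, z) \<in> B' i \<longrightarrow> (x, affine_map (u i) L c z) \<in> C' i)"
    if "\<forall>i<l. unimodular_binpoly (u i) (B' i)" and "\<forall>i<l. unimodular_binpoly (u i) (C' i)" for B' C'
    using that unimodular_binpoly_affine_map by metis
  show ?thesis
    using proj_x_split_closure_P_scheme_mono[OF assms(1) maps] assms(5,6) by (meson subset_antisym)
qed

end
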